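(* Let $\Gamma$ be a single-player extensive-form game without chance nodes, and let $\mathscr C$ be the class of games that share the same game tree and infoset partition as $\Gamma$ (with arbitrary nonnegative utilities). Then $$\mathrm{VoR}^{\mathrm{opt}}(\mathscr C)=\max_{z\in\mathcal Z}\frac{1}{\alpha(z)}.$$
   Context: A single-player extensive-form game without chance nodes consists of a finite rooted tree (nodes $\mathcal H$, leaves $\mathcal Z$, actions $A_h$), all nonterminal nodes belonging to Player 1, a utility $u_1:\mathcal Z\to\mathbb R_{\ge0}$, and a partition $\mathcal I_1$ of nonterminal nodes into infosets with common action sets $A_I$. For a node $h$ with root-to-$h$ path $(h_0,\dots,h_{d-1})$, $\mathrm{obs}_1(h)=(I_k,a_k)_k$ lists infosets of and actions at the $h_k$. $\mathrm{pr}_1(\Gamma)$ has the same tree and utilities, with each infoset partitioned into classes of $h\sim h'\iff\mathrm{obs}_1(h)=\mathrm{obs}_1(h')$. $u_1(\mathrm{opt}(\cdot))$ is the maximum expected utility over behavioral strategies; $\mathrm{VoR}^{\mathrm{opt}}(\Gamma)=u_1(\mathrm{opt}(\mathrm{pr}_1(\Gamma)))/u_1(\mathrm{opt}(\Gamma))$ and $\mathrm{VoR}^{\mathrm{opt}}(\mathscr C)=\sup_{\Gamma'\in\mathscr C}\mathrm{VoR}^{\mathrm{opt}}(\Gamma')$. For $z\in\mathcal Z$ with path infosets/actions $(I_k,a_k)$ and $I\in\mathcal I_1$, $a\in A_I$: $n_z(I)=|\{k:I_k=I\}|$, $n_z(a)=|\{k:I_k=I,a_k=a\}|$, $p_z(a)=n_z(a)/n_z(I)$,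 $\alpha(z)=\prod_{I:n_z(I)>1}\prod_{a\in A_I:n_z(a)>0}p_z(a)^{n_z(a)}$. *)

theory Defs
  imports Complex_Main "HOL-Library.Extended_Real"
begin

text \<open>Game trees: nodes are the action sequences from the root (the root is the empty list).
  A tree is a finite, nonempty, prefix-closed set of such sequences; the child of h via
  action a is h @ [a].\<close>

definition game_tree :: "'a list set \<Rightarrow> bool" where
  "game_tree H \<longleftrightarrow> finite H \<and> [] \<in> H \<and> (\<forall>h a. h @ [a] \<in> H \<longrightarrow> h \<in> H)"

definition acts :: "'a list set \<Rightarrow> 'a list \<Rightarrow> 'a set" where
  "acts H h = {a. h @ [a] \<in> H}"

definition leaves :: "'a list set \<Rightarrow> 'a list set" where
  "leaves H = {h \<in> H. acts H h = {}}"

definition nonterminals :: "'a list set \<Rightarrow> 'a list set" where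
  "nonterminals H = H - leaves H"

text \<open>An infoset partition of the nonterminal nodes is given by a labelling function
  (the infosets are its fibres on the nonterminal nodes); nodes of one infoset share
  the same action set.\<close>

definition infoset_partition :: "'a list set \<Rightarrow> ('a list \<Rightarrow> 'i) \<Rightarrow> bool" where
  "infoset_partition H infs \<longleftrightarrow>
     (\<forall>h\<in>nonterminals H. \<forall>h'\<in>nonterminals H. infs h = infs h' \<longrightarrow> acts H h = acts H h')"

definition strategies :: "'a list set \<Rightarrow> ('a list \<Rightarrow> 'i) \<Rightarrow> ('i \<Rightarrow> 'a \<Rightarrow> real) set" where
  "strategies H infs = {\<sigma>. \<forall>h\<in>nonterminals H.
      (\<forall>a\<in>acts H h. \<sigma> (infs h) a \<ge> 0) \<and> (\<Sum>a\<in>acts H h. \<sigma> (infs h) a) = 1}"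

definition reach :: "('a list \<Rightarrow> 'i) \<Rightarrow> ('i \<Rightarrow> 'a \<Rightarrow> real) \<Rightarrow> 'a list \<Rightarrow> real" where
  "reach infs \<sigma> z = (\<Prod>k<length z. \<sigma> (infs (take k z)) (z ! k))"

definition exp_util ::
  "'a list set \<Rightarrow> ('a list \<Rightarrow> 'i) \<Rightarrow> ('a list \<Rightarrow> real) \<Rightarrow> ('i \<Rightarrow> 'a \<Rightarrow> real) \<Rightarrow> real" where
  "exp_util H infs u \<sigma> = (\<Sum>z\<in>leaves H. reach infs \<sigma> z * u z)"

definition opt_val :: "'a list set \<Rightarrow> ('a list \<Rightarrow> 'i) \<Rightarrow> ('a list \<Rightarrow> real) \<Rightarrow> real" where
  "opt_val H infs u = (SUP \<sigma>\<in>strategies H infs. exp_util H infs u \<sigma>)"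

definition obs :: "('a list \<Rightarrow> 'i) \<Rightarrow> 'a list \<Rightarrow> ('i \<times> 'a) list" where
  "obs infs h = map (\<lambda>k. (infs (take k h), h ! k)) [0..<length h]"

text \<open>pr_1(Gamma): each infoset is split into the classes of equal obs_1.\<close>

definition pr1 :: "('a list \<Rightarrow> 'i) \<Rightarrow> 'a list \<Rightarrow> 'i \<times> ('i \<times> 'a) list" where
  "pr1 infs h = (infs h, obs infs h)"

definition nI :: "('a list \<Rightarrow> 'i) \<Rightarrow> 'a list \<Rightarrow> 'i \<Rightarrow> nat" where
  "nI infs z I = card {k. k < length z \<and> infs (take k z) = I}"

definition na :: "('a list \<Rightarrow> 'i) \<Rightarrow> 'a list \<Rightarrow> 'i \<Rightarrow> 'a \<Rightarrow> nat" where
  "na infs z I a = card {k. k < length z \<and> infs (take k z) = I \<and> z ! k = a}"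

definition alpha :: "'a list set \<Rightarrow> ('a list \<Rightarrow> 'i) \<Rightarrow> 'a list \<Rightarrow> real" where
  "alpha H infs z =
     (\<Prod>I\<in>{I. nI infs z I > 1}.
        \<Prod>a\<in>{a \<in> acts H (take (LEAST k. k < length z \<and> infs (take k z) = I) z). na infs z I a > 0}.
          (real (na infs z I a) / real (nI infs z I)) ^ na infs z I a)"

end

(* Fix a leaf z and let (I_k, a_k) be the infosets and actions along its path. A behavioural
   strategy sigma reaches z with probability prod_k sigma(I_k)(a_k). The actions taken at an infoset
   along the path belong to its action set, so sum_k sigma(I_k)(a_k) / p_z(a_k) <= |z|, and then
   ln x <= x - 1 bounds the product by prod_k p_z(a_k) = alpha(z); playing the empirical frequencies
   p_z attains it. In pr_1(Gamma) the observation sequence identifies the node, so z can be reached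
   with probability 1. Hence, if the utility is maximal, say M, at z, then
   opt(pr_1(Gamma)) <= M <= opt(Gamma) / alpha(z); and the utility that is 1 at z and 0 elsewhere
   attains the ratio 1 / alpha(z). *)

theory Submission
  imports Defs "HOL-Library.Sublist" "HOL-Library.Indicator_Function"
begin

lemma game_tree_prefix:
  assumes "game_tree H" "prefix h z" "z \<in> H"
  shows "h \<in> H"
proof -
  obtain t where "z = h @ t" using assms(2) unfolding prefix_def by blast
  with assms(3) show ?thesis
  proof (induction t arbitrary: z rule: rev_induct)
    case (snoc a t)
    then have "(h @ t) @ [a] \<in> H" by simp
    with assms(1) have "h @ t \<in> H" unfolding game_tree_def by blast
    then show ?case using snoc.IH by blast
  qed simp
qed

lemma game_tree_take: "game_tree H \<Longrightarrow> z \<in> H \<Longrightarrow> take k z \<in> H"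
  using game_tree_prefix take_is_prefix by blast

lemma nonterminals_iff: "h \<in> nonterminals H \<longleftrightarrow> h \<in> H \<and> acts H h \<noteq> {}"
  unfolding nonterminals_def leaves_def by blast

lemma
  assumes "game_tree H" "z \<in> H" "k < length z"
  shows nth_in_acts_take: "z ! k \<in> acts H (take k z)"
    and take_in_nonterminals: "take k z \<in> nonterminals H"
proof -
  show *: "z ! k \<in> acts H (take k z)"
    using game_tree_take[OF assms(1,2), of "Suc k"] assms(3)
    by (simp add: acts_def take_Suc_conv_app_nth)
  show "take k z \<in> nonterminals H"
    unfolding nonterminals_iff using * game_tree_take[OF assms(1,2)] by blast
qed

lemma prefix_child:
  assumes "game_tree H" "z \<in> H" "prefix h z" "z \<noteq> h"
  obtains a where "a \<in> acts H h" "prefix (h @ [a]) z"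
proof -
  obtain t where z: "z = h @ t" using assms(3) unfolding prefix_def by blast
  with assms(4) obtain a t' where "t = a # t'" by (cases t) auto
  with z have child: "prefix (h @ [a]) z" by simp
  then have "h @ [a] \<in> H" using game_tree_prefix assms(1,2) by blast
  with child show ?thesis using that unfolding acts_def by blast
qed

lemma finite_acts:
  assumes "game_tree H"
  shows "finite (acts H h)"
proof -
  have "acts H h = (\<lambda>a. h @ [a]) -` H" unfolding acts_def by auto
  moreover have "finite ((\<lambda>a. h @ [a]) -` H)"
    by (rule finite_vimageI) (use assms in \<open>auto simp: game_tree_def inj_on_def\<close>)
  ultimately show ?thesis by simp
qed

lemma finite_leaves: "game_tree H \<Longrightarrow> finite (leaves H)"
  unfolding game_tree_def leaves_def by auto

lemma leaves_nonempty:
  assumes "game_tree H"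
  shows "leaves H \<noteq> {}"
proof -
  have fin: "finite H" and ne: "H \<noteq> {}" using assms unfolding game_tree_def by auto
  have "Max (length ` H) \<in> length ` H" using fin ne by (intro Max_in) auto
  then obtain h where h: "h \<in> H" "length h = Max (length ` H)" by (metis imageE)
  have "length (h @ [a]) \<notin> length ` H" for a
    using h(2) Max_ge[of "length ` H"] fin by fastforce
  then have "acts H h = {}" unfolding acts_def by blast
  then show ?thesis using h(1) unfolding leaves_def by auto
qed

lemma leaves_below_leaf:
  assumes "game_tree H" "h \<in> leaves H"
  shows "{z \<in> leaves H. prefix h z} = {h}"
proof -
  have "z = h" if z: "z \<in> leaves H" "prefix h z" for z
  proof (rule ccontr)
    assume "z \<noteq> h"
    moreover have "z \<in> H" using z(1) unfolding leaves_def by simp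
    ultimately obtain a where "a \<in> acts H h"
      using prefix_child[OF assms(1) _ z(2)] by metis
    then show False using assms(2) unfolding leaves_def by simp
  qed
  then show ?thesis using assms(2) by auto
qed

lemma leaves_below_nonterminal:
  assumes "game_tree H" "h \<notin> leaves H"
  shows "{z \<in> leaves H. prefix h z} = (\<Union>a\<in>acts H h. {z \<in> leaves H. prefix (h @ [a]) z})"
proof (intro equalityI subsetI)
  fix z assume z: "z \<in> {z \<in> leaves H. prefix h z}"
  then have "z \<noteq> h" "z \<in> H" "prefix h z" using assms(2) unfolding leaves_def by auto
  then obtain a where "a \<in> acts H h" "prefix (h @ [a]) z"
    using prefix_child[OF assms(1)] by metis
  with z show "z \<in> (\<Union>a\<in>acts H h. {z \<in> leaves H. prefix (h @ [a]) z})" by blast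
next
  fix z assume "z \<in> (\<Union>a\<in>acts H h. {z \<in> leaves H. prefix (h @ [a]) z})"
  then obtain a where "z \<in> leaves H" "prefix (h @ [a]) z" by blast
  then show "z \<in> {z \<in> leaves H. prefix h z}"
    by (auto dest: prefix_snocD simp: strict_prefix_def)
qed

lemma reach_Nil: "reach lab \<sigma> [] = 1"
  unfolding reach_def by simp

lemma reach_snoc: "reach lab \<sigma> (h @ [a]) = reach lab \<sigma> h * \<sigma> (lab h) a"
proof -
  have "(\<Prod>k<length h. \<sigma> (lab (take k (h @ [a]))) ((h @ [a]) ! k))
      = (\<Prod>k<length h. \<sigma> (lab (take k h)) (h ! k))"
    by (rule prod.cong) (auto simp: nth_append)
  then show ?thesis unfolding reach_def by (simp add: lessThan_Suc)
qed

lemma reach_nonneg: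
  assumes "game_tree H" "\<sigma> \<in> strategies H lab" "z \<in> H"
  shows "0 \<le> reach lab \<sigma> z"
  unfolding reach_def using assms nth_in_acts_take take_in_nonterminals
  unfolding strategies_def by (intro prod_nonneg) blast

lemma sum_reach_leaves_below:
  assumes gt: "game_tree H" and \<sigma>: "\<sigma> \<in> strategies H lab"
  shows "h \<in> H \<Longrightarrow> (\<Sum>z\<in>{z \<in> leaves H. prefix h z}. reach lab \<sigma> z) = reach lab \<sigma> h"
proof (induction "Max (length ` H) - length h" arbitrary: h rule: less_induct)
  case less
  show ?case
  proof (cases "h \<in> leaves H")
    case True
    then show ?thesis by (simp add: leaves_below_leaf[OF gt])
  next
    case False
    with less.prems have h: "h \<in> nonterminals H" unfolding nonterminals_def by blast
    have IH: "(\<Sum>z\<in>{z \<in> leaves H. prefix (h @ [a]) z}. reach lab \<sigma> z) = reach lab \<sigma> (h @ [a])"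
      if "a \<in> acts H h" for a
    proof (rule less.hyps)
      show ha: "h @ [a] \<in> H" using that unfolding acts_def by simp
      have "length (h @ [a]) \<le> Max (length ` H)"
        using Max_ge[of "length ` H" "length (h @ [a])"] gt ha unfolding game_tree_def by blast
      then show "Max (length ` H) - length (h @ [a]) < Max (length ` H) - length h" by simp
    qed
    have disjoint: "{z \<in> leaves H. prefix (h @ [a]) z} \<inter> {z \<in> leaves H. prefix (h @ [b]) z} = {}"
      if "a \<noteq> b" for a b
      using that by (auto simp: prefix_def)
    have "(\<Sum>z\<in>{z \<in> leaves H. prefix h z}. reach lab \<sigma> z)
        = (\<Sum>a\<in>acts H h. \<Sum>z\<in>{z \<in> leaves H. prefix (h @ [a]) z}. reach lab \<sigma> z)"
      unfolding leaves_below_nonterminal[OF gt False] using disjoint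
      by (intro sum.UNION_disjoint) (auto simp: finite_acts[OF gt] finite_leaves[OF gt])
    also have "\<dots> = (\<Sum>a\<in>acts H h. reach lab \<sigma> h * \<sigma> (lab h) a)"
      using IH by (simp add: reach_snoc)
    also have "\<dots> = reach lab \<sigma> h * (\<Sum>a\<in>acts H h. \<sigma> (lab h) a)"
      by (simp add: sum_distrib_left)
    also have "(\<Sum>a\<in>acts H h. \<sigma> (lab h) a) = 1"
      using \<sigma> h unfolding strategies_def by blast
    finally show ?thesis by simp
  qed
qed

lemma sum_reach_leaves:
  assumes "game_tree H" "\<sigma> \<in> strategies H lab"
  shows "(\<Sum>z\<in>leaves H. reach lab \<sigma> z) = 1"
  using sum_reach_leaves_below[OF assms, of "[]"] assms(1)
  by (simp add: game_tree_def reach_Nil)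

lemma exp_util_le:
  assumes "game_tree H" "\<sigma> \<in> strategies H lab" "\<forall>z\<in>leaves H. u z \<le> M"
  shows "exp_util H lab u \<sigma> \<le> M"
proof -
  have "exp_util H lab u \<sigma> \<le> (\<Sum>z\<in>leaves H. reach lab \<sigma> z * M)"
    unfolding exp_util_def using assms(3) reach_nonneg[OF assms(1,2)]
    by (intro sum_mono mult_left_mono) (auto simp: leaves_def)
  also have "\<dots> = M"
    using sum_reach_leaves[OF assms(1,2)] by (simp add: sum_distrib_right[symmetric])
  finally show ?thesis .
qed

lemma opt_val_le:
  assumes "game_tree H" "strategies H lab \<noteq> {}" "\<forall>z\<in>leaves H. u z \<le> M"
  shows "opt_val H lab u \<le> M"
  unfolding opt_val_def using assms(2) exp_util_le[OF assms(1) _ assms(3)]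
  by (intro cSUP_least) auto

lemma bdd_above_exp_util:
  assumes "game_tree H"
  shows "bdd_above (exp_util H lab u ` strategies H lab)"
  using exp_util_le[OF assms, of _ lab u "Max (u ` leaves H)"] finite_leaves[OF assms]
  by (intro bdd_aboveI2) auto

lemma reach_mult_le_opt_val:
  assumes "game_tree H" "\<sigma> \<in> strategies H lab" "\<forall>z\<in>leaves H. 0 \<le> u z" "z \<in> leaves H"
  shows "reach lab \<sigma> z * u z \<le> opt_val H lab u"
proof -
  have "reach lab \<sigma> z * u z \<le> exp_util H lab u \<sigma>"
    unfolding exp_util_def using assms finite_leaves[OF assms(1)] reach_nonneg[OF assms(1,2)]
    by (intro member_le_sum) (auto simp: leaves_def)
  also have "\<dots> \<le> opt_val H lab u"
    unfolding opt_val_def by (rule cSUP_upper[OF assms(2) bdd_above_exp_util[OF assms(1)]])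
  finally show ?thesis .
qed

lemma exp_util_indicator:
  assumes "game_tree H" "z \<in> leaves H"
  shows "exp_util H lab (indicator {z}) \<sigma> = reach lab \<sigma> z"
proof -
  have "leaves H \<inter> {z} = {z}" using assms(2) by blast
  then show ?thesis unfolding exp_util_def using finite_leaves[OF assms(1)] by simp
qed

lemma reach_le_1:
  assumes "game_tree H" "\<sigma> \<in> strategies H lab" "z \<in> leaves H"
  shows "reach lab \<sigma> z \<le> 1"
proof -
  have "reach lab \<sigma> z = exp_util H lab (indicator {z}) \<sigma>"
    by (rule exp_util_indicator[OF assms(1,3), symmetric])
  also have "\<dots> \<le> 1" by (rule exp_util_le[OF assms(1,2)]) simp
  finally show ?thesis .
qed

lemma opt_val_indicator:
  assumes "game_tree H" "z \<in> leaves H" "\<sigma> \<in> strategies H lab"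
    and "\<forall>\<sigma>'\<in>strategies H lab. reach lab \<sigma>' z \<le> reach lab \<sigma> z"
  shows "opt_val H lab (indicator {z}) = reach lab \<sigma> z"
  unfolding opt_val_def exp_util_indicator[OF assms(1,2)]
  using assms(3,4) by (intro cSup_eq_maximum) auto

lemma strategies_nonempty:
  assumes gt: "game_tree H" and ip: "infoset_partition H lab"
  shows "strategies H lab \<noteq> {}"
proof -
  define choice where "choice I = (SOME a. \<exists>h\<in>nonterminals H. lab h = I \<and> a \<in> acts H h)" for I
  have choice: "choice (lab h) \<in> acts H h" if h: "h \<in> nonterminals H" for h
  proof -
    obtain a where a: "a \<in> acts H h" using h unfolding nonterminals_iff by blast
    have "\<exists>h'\<in>nonterminals H. lab h' = lab h \<and> choice (lab h) \<in> acts H h'"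
      unfolding choice_def by (rule someI[where x = a]) (use h a in blast)
    then obtain h' where h': "h' \<in> nonterminals H" "lab h' = lab h" "choice (lab h) \<in> acts H h'"
      by blast
    have "acts H h' = acts H h"
      using ip h'(1,2) h unfolding infoset_partition_def by blast
    with h'(3) show ?thesis by simp
  qed
  have "(\<lambda>I a. of_bool (a = choice I)) \<in> strategies H lab"
    unfolding strategies_def
  proof (intro CollectI ballI conjI)
    fix h assume "h \<in> nonterminals H"
    then have "acts H h \<inter> {a. a = choice (lab h)} = {choice (lab h)}" using choice by blast
    then show "(\<Sum>a\<in>acts H h. of_bool (a = choice (lab h)) :: real) = 1"
      using finite_acts[OF gt] by (simp only: sum_of_bool_eq) simp
  qed simp
  then show ?thesis by blast
qed

lemma map_snd_obs [simp]: "map snd (obs infs h) = h"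
  unfolding obs_def by (simp add: comp_def map_nth)

lemma inj_pr1: "inj (pr1 infs)"
  by (rule injI) (metis map_snd_obs pr1_def snd_conv)

lemma infoset_partition_inj: "inj lab \<Longrightarrow> infoset_partition H lab"
  unfolding infoset_partition_def inj_def by blast

lemma ex_strategy_reach_eq_1:
  assumes gt: "game_tree H" and inj: "inj lab" and z: "z \<in> H"
  shows "\<exists>\<sigma>\<in>strategies H lab. reach lab \<sigma> z = 1"
proof -
  obtain \<sigma>\<^sub>0 where \<sigma>\<^sub>0: "\<sigma>\<^sub>0 \<in> strategies H lab"
    using strategies_nonempty[OF gt infoset_partition_inj[OF inj]] by blast
  define \<sigma> where "\<sigma> l a = (let h = inv lab l in
    if strict_prefix h z then of_bool (a = z ! length h) else \<sigma>\<^sub>0 l a)" for l a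
  have \<sigma>_lab: "\<sigma> (lab h) a = (if strict_prefix h z then of_bool (a = z ! length h) else \<sigma>\<^sub>0 (lab h) a)"
    for h a
    using inj by (simp add: \<sigma>_def)
  have strategy: "\<sigma> \<in> strategies H lab"
    unfolding strategies_def
  proof (intro CollectI ballI conjI)
    fix h assume h: "h \<in> nonterminals H"
    show "0 \<le> \<sigma> (lab h) a" if "a \<in> acts H h" for a
      using \<sigma>\<^sub>0 h that unfolding \<sigma>_lab strategies_def by auto
    show "(\<Sum>a\<in>acts H h. \<sigma> (lab h) a) = 1"
    proof (cases "strict_prefix h z")
      case True
      then have "h = take (length h) z" "length h < length z"
        by (auto simp: strict_prefix_def prefix_def dest: prefix_length_less)
      then have "z ! length h \<in> acts H h" using nth_in_acts_take[OF gt z] by metis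
      then have "acts H h \<inter> {a. a = z ! length h} = {z ! length h}" by blast
      then show ?thesis using True finite_acts[OF gt] unfolding \<sigma>_lab by simp
    next
      case False
      then show ?thesis using \<sigma>\<^sub>0 h unfolding \<sigma>_lab strategies_def by simp
    qed
  qed
  have path: "strict_prefix (take k z) z" if "k < length z" for k
    using that by (auto simp: strict_prefix_def take_is_prefix)
  have "reach lab \<sigma> z = 1"
    unfolding reach_def \<sigma>_lab using path by (intro prod.neutral) simp
  with strategy show ?thesis by blast
qed

lemma prod_le_prod_if_sum_ratios_le_card:
  fixes s q :: "'b \<Rightarrow> real"
  assumes "finite K" "\<forall>k\<in>K. 0 \<le> s k" "\<forall>k\<in>K. 0 < q k" "(\<Sum>k\<in>K. s k / q k) \<le> card K"
  shows "(\<Prod>k\<in>K. s k) \<le> (\<Prod>k\<in>K. q k)"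
proof (cases "\<exists>k\<in>K. s k = 0")
  case True
  then have "(\<Prod>k\<in>K. s k) = 0" using assms(1) by (simp add: prod_zero_iff)
  moreover have "0 \<le> (\<Prod>k\<in>K. q k)" using assms(3) by (intro prod_nonneg) force
  ultimately show ?thesis by simp
next
  case False
  define r where "r k = s k / q k" for k
  have r_pos: "0 < r k" if "k \<in> K" for k
    using False assms(2,3) that unfolding r_def by force
  have "ln (\<Prod>k\<in>K. r k) = (\<Sum>k\<in>K. ln (r k))"
    using r_pos by (intro ln_prod assms(1)) force
  also have "\<dots> \<le> (\<Sum>k\<in>K. r k - 1)"
    using r_pos by (intro sum_mono ln_le_minus_one) auto
  also have "\<dots> \<le> 0"
    using assms(4) by (simp add: sum_subtractf r_def)
  finally have "ln (\<Prod>k\<in>K. r k) \<le> 0" .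
  moreover have "0 < (\<Prod>k\<in>K. r k)" using r_pos by (intro prod_pos) simp
  ultimately have "(\<Prod>k\<in>K. s k) / (\<Prod>k\<in>K. q k) \<le> 1"
    by (simp add: r_def prod_dividef)
  moreover have "0 < (\<Prod>k\<in>K. q k)" using assms(3) by (intro prod_pos) simp
  ultimately show ?thesis by simp
qed

lemma prod_fun_comp:
  assumes "finite S"
  shows "(\<Prod>x\<in>S. f (g x)) = (\<Prod>y\<in>g ` S. f y ^ card {x \<in> S. g x = y})"
proof -
  have "(\<Prod>x\<in>S. f (g x)) = (\<Prod>y\<in>g ` S. \<Prod>x\<in>{x \<in> S. g x = y}. f (g x))"
    by (rule prod.image_gen[OF assms])
  also have "\<dots> = (\<Prod>y\<in>g ` S. f y ^ card {x \<in> S. g x = y})"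
    by (intro prod.cong refl) simp
  finally show ?thesis .
qed

definition freq :: "('a list \<Rightarrow> 'i) \<Rightarrow> 'a list \<Rightarrow> 'i \<Rightarrow> 'a \<Rightarrow> real" where
  "freq infs z I a = real (na infs z I a) / real (nI infs z I)"

lemma na_le_nI: "na infs z I a \<le> nI infs z I"
  unfolding na_def nI_def by (intro card_mono) auto

lemma na_pos: "k < length z \<Longrightarrow> 0 < na infs z (infs (take k z)) (z ! k)"
  unfolding na_def by (subst card_gt_0_iff) auto

lemma nI_pos: "k < length z \<Longrightarrow> 0 < nI infs z (infs (take k z))"
  using na_pos na_le_nI by (rule less_le_trans)

lemma freq_pos:
  assumes "k < length z"
  shows "0 < freq infs z (infs (take k z)) (z ! k)"
  unfolding freq_def using na_pos[OF assms, of infs] nI_pos[OF assms, of infs] by simp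

lemma nth_in_acts_same_infoset:
  assumes "game_tree H" "infoset_partition H infs" "z \<in> H" "h \<in> nonterminals H"
    and "k < length z" "infs (take k z) = infs h"
  shows "z ! k \<in> acts H h"
proof -
  have "acts H (take k z) = acts H h"
    using assms(2,4,6) take_in_nonterminals[OF assms(1,3,5)] unfolding infoset_partition_def by blast
  then show ?thesis using nth_in_acts_take[OF assms(1,3,5)] by simp
qed

lemma sum_na_acts:
  assumes "game_tree H" "infoset_partition H infs" "z \<in> H" "h \<in> nonterminals H"
  shows "(\<Sum>a\<in>acts H h. real (na infs z (infs h) a)) = real (nI infs z (infs h))"
proof -
  let ?K = "{k. k < length z \<and> infs (take k z) = infs h}"
  have "real (nI infs z (infs h)) = (\<Sum>k\<in>?K. 1)" by (simp add: nI_def)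
  also have "\<dots> = (\<Sum>a\<in>acts H h. real (card {k \<in> ?K. z ! k = a}) * 1)"
    using sum_fun_comp[where S = ?K and R = "acts H h" and g = "\<lambda>k. z ! k" and f = "\<lambda>_. 1::real"]
      nth_in_acts_same_infoset[OF assms] finite_acts[OF assms(1)] by auto
  also have "\<dots> = (\<Sum>a\<in>acts H h. real (na infs z (infs h) a))"
    unfolding na_def by (simp add: conj_assoc)
  finally show ?thesis by simp
qed

lemma ex_strategy_reach_prod_freq:
  assumes gt: "game_tree H" and ip: "infoset_partition H infs" and z: "z \<in> H"
  shows "\<exists>\<sigma>\<in>strategies H infs.
           reach infs \<sigma> z = (\<Prod>k<length z. freq infs z (infs (take k z)) (z ! k))"
proof -
  obtain \<sigma>\<^sub>0 where \<sigma>\<^sub>0: "\<sigma>\<^sub>0 \<in> strategies H infs" using strategies_nonempty[OF gt ip] by blast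
  define \<sigma> where "\<sigma> I a = (if 0 < nI infs z I then freq infs z I a else \<sigma>\<^sub>0 I a)" for I a
  have "\<sigma> \<in> strategies H infs"
    unfolding strategies_def
  proof (intro CollectI ballI conjI)
    fix h assume h: "h \<in> nonterminals H"
    show "0 \<le> \<sigma> (infs h) a" if "a \<in> acts H h" for a
      using \<sigma>\<^sub>0 h that unfolding \<sigma>_def freq_def strategies_def by auto
    show "(\<Sum>a\<in>acts H h. \<sigma> (infs h) a) = 1"
    proof (cases "0 < nI infs z (infs h)")
      case True
      then show ?thesis using sum_na_acts[OF gt ip z h]
        by (simp add: \<sigma>_def freq_def sum_divide_distrib[symmetric])
    next
      case False
      then show ?thesis using \<sigma>\<^sub>0 h unfolding \<sigma>_def strategies_def by simp
    qed
  qed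
  moreover have "reach infs \<sigma> z = (\<Prod>k<length z. freq infs z (infs (take k z)) (z ! k))"
    unfolding reach_def \<sigma>_def using nI_pos[of _ z infs] by (intro prod.cong) auto
  ultimately show ?thesis by blast
qed

lemma sum_strategy_div_na_le_1:
  assumes gt: "game_tree H" and ip: "infoset_partition H infs" and z: "z \<in> H"
    and \<sigma>: "\<sigma> \<in> strategies H infs" and h: "h \<in> nonterminals H"
  shows "(\<Sum>k | k < length z \<and> infs (take k z) = infs h.
            \<sigma> (infs h) (z ! k) / real (na infs z (infs h) (z ! k))) \<le> 1"
proof -
  let ?K = "{k. k < length z \<and> infs (take k z) = infs h}"
  let ?c = "\<lambda>a. \<sigma> (infs h) a / real (na infs z (infs h) a)"
  have "(\<Sum>k\<in>?K. ?c (z ! k)) = (\<Sum>a\<in>acts H h. real (card {k \<in> ?K. z ! k = a}) * ?c a)"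
    using nth_in_acts_same_infoset[OF gt ip z h] finite_acts[OF gt]
    by (intro sum_fun_comp) auto
  also have "\<dots> = (\<Sum>a\<in>acts H h. real (na infs z (infs h) a) * ?c a)"
    unfolding na_def by (simp add: conj_assoc)
  also have "\<dots> \<le> (\<Sum>a\<in>acts H h. \<sigma> (infs h) a)"
    using \<sigma> h by (intro sum_mono) (auto simp: strategies_def)
  also have "\<dots> = 1" using \<sigma> h by (simp add: strategies_def)
  finally show ?thesis .
qed

lemma sum_ratio_freq_le_length:
  assumes gt: "game_tree H" and ip: "infoset_partition H infs" and z: "z \<in> H"
    and \<sigma>: "\<sigma> \<in> strategies H infs"
  shows "(\<Sum>k<length z. \<sigma> (infs (take k z)) (z ! k) / freq infs z (infs (take k z)) (z ! k))
           \<le> length z"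
proof -
  let ?I = "\<lambda>k. infs (take k z)"
  let ?K = "\<lambda>J. {k \<in> {..<length z}. ?I k = J}"
  let ?r = "\<lambda>k. \<sigma> (?I k) (z ! k) / freq infs z (?I k) (z ! k)"
  have "(\<Sum>k<length z. ?r k) = (\<Sum>J\<in>?I ` {..<length z}. \<Sum>k\<in>?K J. ?r k)"
    by (rule sum.image_gen) simp
  also have "\<dots> \<le> (\<Sum>J\<in>?I ` {..<length z}. \<Sum>k\<in>?K J. 1)"
  proof (rule sum_mono)
    fix J assume "J \<in> ?I ` {..<length z}"
    then obtain j where j: "j < length z" "J = ?I j" by auto
    have "(\<Sum>k\<in>?K J. ?r k) = real (nI infs z J) *
        (\<Sum>k | k < length z \<and> ?I k = ?I j. \<sigma> (?I j) (z ! k) / real (na infs z (?I j) (z ! k)))"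
      unfolding sum_distrib_left j(2) freq_def by (intro sum.cong) auto
    also have "\<dots> \<le> real (nI infs z J)"
      using sum_strategy_div_na_le_1[OF gt ip z \<sigma> take_in_nonterminals[OF gt z j(1)]]
      by (simp add: mult_left_le)
    also have "\<dots> = (\<Sum>k\<in>?K J. 1)" unfolding nI_def by (simp add: conj_commute)
    finally show "(\<Sum>k\<in>?K J. ?r k) \<le> (\<Sum>k\<in>?K J. 1)" .
  qed
  also have "\<dots> = (\<Sum>k<length z. 1)" by (rule sum.image_gen[symmetric]) simp
  finally show ?thesis by simp
qed

lemma reach_le_prod_freq:
  assumes gt: "game_tree H" and ip: "infoset_partition H infs" and z: "z \<in> H"
    and \<sigma>: "\<sigma> \<in> strategies H infs"
  shows "reach infs \<sigma> z \<le> (\<Prod>k<length z. freq infs z (infs (take k z)) (z ! k))"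
  unfolding reach_def
proof (rule prod_le_prod_if_sum_ratios_le_card)
  show "\<forall>k\<in>{..<length z}. 0 \<le> \<sigma> (infs (take k z)) (z ! k)"
    using \<sigma> nth_in_acts_take[OF gt z] take_in_nonterminals[OF gt z]
    unfolding strategies_def by blast
  show "\<forall>k\<in>{..<length z}. 0 < freq infs z (infs (take k z)) (z ! k)"
    using freq_pos by blast
  show "(\<Sum>k<length z. \<sigma> (infs (take k z)) (z ! k) / freq infs z (infs (take k z)) (z ! k))
          \<le> card {..<length z}"
    using sum_ratio_freq_le_length[OF assms] by simp
qed simp

(* alpha leaves out the pairs (I, a) with n_z(I) = 1, whose factor is 1; the LEAST in its definition
   only selects some node of I, all of which share the action set. *)
lemma alpha_eq_prod_freq:
  assumes gt: "game_tree H" and ip: "infoset_partition H infs" and z: "z \<in> H"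
  shows "alpha H infs z = (\<Prod>k<length z. freq infs z (infs (take k z)) (z ! k))"
proof -
  define p where "p k = (infs (take k z), z ! k)" for k
  define S where "S = {I. 1 < nI infs z I}"
  define A where "A I = {a \<in> acts H (take (LEAST k. k < length z \<and> infs (take k z) = I) z).
                          0 < na infs z I a}" for I
  define f where "f q = freq infs z (fst q) (snd q) ^ na infs z (fst q) (snd q)" for q
  have fibre: "{k \<in> {..<length z}. p k = q}
      = {k. k < length z \<and> infs (take k z) = fst q \<and> z ! k = snd q}" for q
    by (auto simp: p_def prod_eq_iff)
  have in_A: "z ! k \<in> A (infs (take k z))" if k: "k < length z" for k
  proof -
    define j where "j = (LEAST j. j < length z \<and> infs (take j z) = infs (take k z))"
    have j: "j < length z \<and> infs (take j z) = infs (take k z)"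
      unfolding j_def by (rule LeastI[of _ k]) (use k in simp)
    then have "z ! k \<in> acts H (take j z)"
      using nth_in_acts_same_infoset[OF gt ip z take_in_nonterminals[OF gt z] k] by simp
    then show ?thesis using na_pos[OF k] unfolding A_def j_def by simp
  qed
  have "(\<Prod>k<length z. freq infs z (infs (take k z)) (z ! k))
      = (\<Prod>q\<in>p ` {..<length z}. freq infs z (fst q) (snd q) ^ card {k \<in> {..<length z}. p k = q})"
    using prod_fun_comp[of "{..<length z}" "\<lambda>q. freq infs z (fst q) (snd q)" p] by (simp add: p_def)
  also have "\<dots> = (\<Prod>q\<in>p ` {..<length z}. f q)"
    by (simp only: fibre f_def na_def)
  also have "\<dots> = (\<Prod>q\<in>Sigma S A. f q)"
  proof (rule prod.mono_neutral_right)
    show "Sigma S A \<subseteq> p ` {..<length z}"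
      unfolding A_def na_def p_def by (force simp: card_gt_0_iff)
    show "\<forall>q\<in>p ` {..<length z} - Sigma S A. f q = 1"
    proof
      fix q assume "q \<in> p ` {..<length z} - Sigma S A"
      then obtain k where k: "k < length z" "q = p k" "p k \<notin> Sigma S A" by auto
      then have nI: "nI infs z (infs (take k z)) = 1"
        using in_A[OF k(1)] nI_pos[OF k(1), of infs] unfolding S_def p_def by auto
      then have "na infs z (infs (take k z)) (z ! k) = 1"
        using na_pos[OF k(1), of infs] na_le_nI[of infs z "infs (take k z)" "z ! k"] by linarith
      with nI show "f q = 1" unfolding f_def freq_def k(2) p_def by simp
    qed
  qed simp
  also have "\<dots> = alpha H infs z"
  proof -
    have "S \<subseteq> (\<lambda>k. infs (take k z)) ` {..<length z}"
    proof
      fix I assume "I \<in> S"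
      then have "0 < nI infs z I" unfolding S_def by simp
      then obtain k where "k < length z" "infs (take k z) = I"
        unfolding nI_def by (auto simp: card_gt_0_iff)
      then show "I \<in> (\<lambda>k. infs (take k z)) ` {..<length z}" by auto
    qed
    then have "finite S" by (rule finite_subset) simp
    moreover have "\<forall>I\<in>S. finite (A I)" unfolding A_def using finite_acts[OF gt] by simp
    ultimately have "(\<Prod>q\<in>Sigma S A. f q) = (\<Prod>I\<in>S. \<Prod>a\<in>A I. f (I, a))"
      by (simp add: prod.Sigma)
    also have "\<dots> = alpha H infs z" unfolding alpha_def S_def A_def f_def freq_def by simp
    finally show ?thesis .
  qed
  finally show ?thesis ..
qed

lemma alpha_pos:
  assumes "game_tree H" "infoset_partition H infs" "z \<in> H"
  shows "0 < alpha H infs z"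
  unfolding alpha_eq_prod_freq[OF assms] using freq_pos by (intro prod_pos) simp

lemma ex_strategy_reach_alpha:
  assumes "game_tree H" "infoset_partition H infs" "z \<in> H"
  shows "\<exists>\<sigma>\<in>strategies H infs. reach infs \<sigma> z = alpha H infs z"
  unfolding alpha_eq_prod_freq[OF assms] by (rule ex_strategy_reach_prod_freq[OF assms])

lemma reach_le_alpha:
  assumes "game_tree H" "infoset_partition H infs" "z \<in> H" "\<sigma> \<in> strategies H infs"
  shows "reach infs \<sigma> z \<le> alpha H infs z"
  unfolding alpha_eq_prod_freq[OF assms(1-3)] by (rule reach_le_prod_freq[OF assms])

lemma opt_val_indicator_eq_alpha:
  assumes gt: "game_tree H" and ip: "infoset_partition H infs" and z: "z \<in> leaves H"
  shows "opt_val H infs (indicator {z}) = alpha H infs z"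
proof -
  have zH: "z \<in> H" using z unfolding leaves_def by simp
  obtain \<sigma> where \<sigma>: "\<sigma> \<in> strategies H infs" "reach infs \<sigma> z = alpha H infs z"
    using ex_strategy_reach_alpha[OF gt ip zH] by blast
  have "opt_val H infs (indicator {z}) = reach infs \<sigma> z"
    using \<sigma>(1) reach_le_alpha[OF gt ip zH] \<sigma>(2) by (intro opt_val_indicator[OF gt z]) auto
  also have "\<dots> = alpha H infs z" by (fact \<sigma>(2))
  finally show ?thesis .
qed

lemma opt_val_pr1_indicator:
  assumes gt: "game_tree H" and z: "z \<in> leaves H"
  shows "opt_val H (pr1 infs) (indicator {z}) = 1"
proof -
  have zH: "z \<in> H" using z unfolding leaves_def by simp
  obtain \<sigma> where \<sigma>: "\<sigma> \<in> strategies H (pr1 infs)" "reach (pr1 infs) \<sigma> z = 1"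
    using ex_strategy_reach_eq_1[OF gt inj_pr1 zH] by blast
  have "opt_val H (pr1 infs) (indicator {z}) = reach (pr1 infs) \<sigma> z"
    using \<sigma> reach_le_1[OF gt _ z] by (intro opt_val_indicator[OF gt z]) auto
  also have "\<dots> = 1" by (fact \<sigma>(2))
  finally show ?thesis .
qed

lemma opt_val_ratio_le_inverse_alpha:
  assumes gt: "game_tree H" and ip: "infoset_partition H infs" and lab: "strategies H lab \<noteq> {}"
    and u: "\<forall>z\<in>leaves H. 0 \<le> u z" and opt: "0 < opt_val H infs u"
  shows "\<exists>z\<in>leaves H. opt_val H lab u / opt_val H infs u \<le> 1 / alpha H infs z"
proof -
  have "Max (u ` leaves H) \<in> u ` leaves H"
    using finite_leaves[OF gt] leaves_nonempty[OF gt] by (intro Max_in) auto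
  then obtain z where z: "z \<in> leaves H" "u z = Max (u ` leaves H)" by (metis imageE)
  have u_le: "\<forall>x\<in>leaves H. u x \<le> u z" using z(2) finite_leaves[OF gt] by simp
  have zH: "z \<in> H" using z unfolding leaves_def by simp
  obtain \<sigma> where \<sigma>: "\<sigma> \<in> strategies H infs" "reach infs \<sigma> z = alpha H infs z"
    using ex_strategy_reach_alpha[OF gt ip zH] by blast
  have lower: "alpha H infs z * u z \<le> opt_val H infs u"
    using reach_mult_le_opt_val[OF gt \<sigma>(1) u z(1)] \<sigma>(2) by simp
  have "0 < u z" using opt opt_val_le[OF gt _ u_le] \<sigma>(1) by fastforce
  have "opt_val H lab u / opt_val H infs u \<le> u z / opt_val H infs u"
    using opt_val_le[OF gt lab u_le] opt by (simp add: divide_right_mono)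
  also have "\<dots> \<le> u z / (alpha H infs z * u z)"
    using lower opt \<open>0 < u z\<close> alpha_pos[OF gt ip zH] by (intro divide_left_mono) auto
  also have "\<dots> = 1 / alpha H infs z" using \<open>0 < u z\<close> by simp
  finally show ?thesis using z(1) by blast
qed

lemma opt_val_ratio_indicator:
  assumes "game_tree H" "infoset_partition H infs" "z \<in> leaves H"
  shows "0 < opt_val H infs (indicator {z})"
    and "opt_val H (pr1 infs) (indicator {z}) / opt_val H infs (indicator {z}) = 1 / alpha H infs z"
  using alpha_pos[OF assms(1,2)] assms(3) opt_val_indicator_eq_alpha[OF assms]
    opt_val_pr1_indicator[OF assms(1,3), of infs]
  by (simp_all add: leaves_def)

theorem corollary3:
  fixes H :: "'a list set" and infs :: "'a list \<Rightarrow> 'i"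
  assumes "game_tree H" and "infoset_partition H infs"
  shows "(SUP u\<in>{u. (\<forall>z\<in>leaves H. u z \<ge> 0) \<and> opt_val H infs u > 0}.
            ereal (opt_val H (pr1 infs) u / opt_val H infs u))
         = ereal (Max ((\<lambda>z. 1 / alpha H infs z) ` leaves H))"
proof -
  let ?U = "{u. (\<forall>z\<in>leaves H. u z \<ge> 0) \<and> opt_val H infs u > 0}"
  let ?ratio = "\<lambda>u. opt_val H (pr1 infs) u / opt_val H infs u"
  let ?M = "Max ((\<lambda>z. 1 / alpha H infs z) ` leaves H)"
  have fin: "finite ((\<lambda>z. 1 / alpha H infs z) ` leaves H)"
    using finite_leaves[OF assms(1)] by simp
  have upper: "(SUP u\<in>?U. ereal (?ratio u)) \<le> ereal ?M"
  proof (rule SUP_least)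
    fix u assume "u \<in> ?U"
    then obtain z where "z \<in> leaves H" "?ratio u \<le> 1 / alpha H infs z"
      using opt_val_ratio_le_inverse_alpha[OF assms
          strategies_nonempty[OF assms(1) infoset_partition_inj[OF inj_pr1]]] by blast
    with Max_ge[OF fin] show "ereal (?ratio u) \<le> ereal ?M" by fastforce
  qed
  have "?M \<in> (\<lambda>z. 1 / alpha H infs z) ` leaves H"
    by (rule Max_in[OF fin]) (simp add: leaves_nonempty[OF assms(1)])
  then obtain z where z: "z \<in> leaves H" "?M = 1 / alpha H infs z" by blast
  then have lower: "ereal ?M \<le> (SUP u\<in>?U. ereal (?ratio u))"
    using opt_val_ratio_indicator[OF assms z(1)]
    by (intro SUP_upper2[where i = "indicator {z}"]) simp_all
  from upper lower show ?thesis by (rule antisym)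
qed

end
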